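(* Let $\beta>2\alpha>0$, let $\lambda_{\min},\lambda_{\max}>0$ be the smallest and largest eigenvalues of $A$, and let $R>2\lambda_{\max}/\lambda_{\min}$, so that $c_{11}:=\frac{\lambda_{\min}}{2}-\frac{\lambda_{\max}}{R}>0$. Then for every $x\in\mathbb{R}^{s_N}$ with $\|x\|>R\sqrt N$, $$\frac{N}{s_N}\varphi_N\Big(\sqrt{\tfrac{s_N}{N}}x\Big)\ge c_{11}\|x\|_2^2.$$
   Context: $A=\beta I+\alpha(P+P^T)$ is the $s_N\times s_N$ symmetric circulant matrix ($P$ the cyclic shift), with $s_N\le N$ a positive integer; $e_k$ the standard basis of $\mathbb{R}^{s_N}$; $\varphi_N(x)=\frac12x^TAx-\sum_{k=1}^{s_N}\log\cosh(x^TAe_k)$; $\|\cdot\|=\|\cdot\|_2$ is the Euclidean norm. *)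

theory Defs
  imports Complex_Main "Jordan_Normal_Form.Char_Poly"
begin

definition cyc_shift :: "nat \<Rightarrow> real mat" where
  "cyc_shift s = mat s s (\<lambda>(i, j). if j = (i + 1) mod s then 1 else 0)"

definition circA :: "real \<Rightarrow> real \<Rightarrow> nat \<Rightarrow> real mat" where
  "circA \<alpha> \<beta> s = \<beta> \<cdot>\<^sub>m 1\<^sub>m s + \<alpha> \<cdot>\<^sub>m (cyc_shift s + transpose_mat (cyc_shift s))"

definition vnorm :: "real vec \<Rightarrow> real" where
  "vnorm x = sqrt (x \<bullet> x)"

definition phiN :: "real \<Rightarrow> real \<Rightarrow> nat \<Rightarrow> real vec \<Rightarrow> real" where
  "phiN \<alpha> \<beta> s x = (1/2) * (x \<bullet> (circA \<alpha> \<beta> s *\<^sub>v x))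
      - (\<Sum>k<s. ln (cosh (x \<bullet> (circA \<alpha> \<beta> s *\<^sub>v unit_vec s k))))"

end

theory Submission
  imports Defs "HOL-Analysis.Function_Topology" "HOL-Analysis.Convex"
begin

(* With y = sqrt (s/N) x the rescaled functional equals x^T A x / 2 - (N/s) sum_k log cosh ((A y)_k).
   The quadratic part is at least lmin |x|^2 / 2: minimising the quadratic form of the symmetric
   matrix A on the compact unit sphere produces an eigenvalue below every Rayleigh quotient.
   Since log cosh t <= |t| and A has nonnegative entries with all row sums beta + 2 alpha, the
   log cosh part is at most (N/s) (beta + 2 alpha) |y|_1 <= lmax sqrt N |x| by Cauchy-Schwarz, the
   constant vector being an eigenvector for beta + 2 alpha.  Hence the functional is at least
   lmin |x|^2 / 2 - lmax sqrt N |x| >= (lmin / 2 - lmax / R) |x|^2 as soon as sqrt N < |x| / R.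
   That lmin (and so R) is positive follows from x^T A x >= (beta - 2 alpha) |x|^2, which holds
   because x^T P x >= - |x|^2 for the cyclic shift P. *)

unbundle no inner_syntax

section \<open>Euclidean norm of real vectors\<close>

lemma scalar_prod_self_eq_sum_power2:
  "x \<in> carrier_vec n \<Longrightarrow> x \<bullet> x = (\<Sum>i<n. (x $ i)\<^sup>2 :: 'a :: comm_semiring_1)"
  by (simp add: scalar_prod_def atLeast0LessThan power2_eq_square)

lemma scalar_prod_self_nonneg: "0 \<le> (x :: 'a :: linordered_idom vec) \<bullet> x"
  unfolding scalar_prod_def by (intro sum_nonneg) simp

lemma scalar_prod_self_eq_0_iff:
  fixes x :: "'a :: linordered_idom vec"
  assumes "x \<in> carrier_vec n"
  shows "x \<bullet> x = 0 \<longleftrightarrow> x = 0\<^sub>v n"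
proof
  assume "x \<bullet> x = 0"
  then have "\<forall>i\<in>{..<n}. (x $ i)\<^sup>2 = 0"
    using assms by (subst sum_nonneg_eq_0_iff[symmetric]) (auto simp: scalar_prod_self_eq_sum_power2)
  then show "x = 0\<^sub>v n"
    using assms by (intro eq_vecI) auto
qed (use assms in simp)

lemma vnorm_nonneg: "0 \<le> vnorm x"
  unfolding vnorm_def using scalar_prod_self_nonneg by simp

lemma vnorm_power2: "(vnorm x)\<^sup>2 = x \<bullet> x"
  unfolding vnorm_def using scalar_prod_self_nonneg by simp

lemma vnorm_smult: "vnorm (c \<cdot>\<^sub>v x) = \<bar>c\<bar> * vnorm x"
  unfolding vnorm_def by (simp add: real_sqrt_mult)

lemma sum_abs_le_sqrt_dim_vnorm:
  assumes "x \<in> carrier_vec n"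
  shows "(\<Sum>i<n. \<bar>x $ i\<bar>) \<le> sqrt n * vnorm x"
proof (rule power2_le_imp_le)
  have "(\<Sum>i<n. \<bar>x $ i\<bar>)\<^sup>2 \<le> (\<Sum>i<n. \<bar>x $ i\<bar>\<^sup>2) * card {..<n}"
    by (rule sum_squared_le_sum_of_squares)
  also have "\<dots> = (sqrt n * vnorm x)\<^sup>2"
    using assms by (simp add: power_mult_distrib vnorm_power2 scalar_prod_self_eq_sum_power2)
  finally show "(\<Sum>i<n. \<bar>x $ i\<bar>)\<^sup>2 \<le> (sqrt n * vnorm x)\<^sup>2" .
qed (simp add: vnorm_nonneg)

lemma smult_mat_mult_vec:
  "dim_vec v = dim_col A \<Longrightarrow> (c \<cdot>\<^sub>m A) *\<^sub>v v = c \<cdot>\<^sub>v (A *\<^sub>v (v :: 'a :: comm_semiring_0 vec))"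
  by (intro eq_vecI) auto

lemma scalar_prod_mult_mat_vec_sum:
  fixes A :: "'a :: comm_semiring_1 mat"
  assumes "A \<in> carrier_mat n n" "x \<in> carrier_vec n" "y \<in> carrier_vec n"
  shows "x \<bullet> (A *\<^sub>v y) = (\<Sum>i<n. \<Sum>j<n. x $ i * A $$ (i, j) * y $ j)"
  using assms by (simp add: scalar_prod_def atLeast0LessThan sum_distrib_left mult.assoc)

lemma scalar_prod_mult_mat_vec_unit:
  fixes A :: "'a :: comm_semiring_1 mat"
  assumes "A \<in> carrier_mat n n" "y \<in> carrier_vec n" "k < n"
  shows "y \<bullet> (A *\<^sub>v unit_vec n k) = (\<Sum>i<n. A $$ (i, k) * y $ i)"
proof -
  have "y \<bullet> (A *\<^sub>v unit_vec n k) = (transpose_mat A *\<^sub>v y) \<bullet> unit_vec n k"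
    by (rule transpose_vec_mult_scalar[symmetric]) (use assms in auto)
  also have "\<dots> = col A k \<bullet> y"
    using assms by simp
  finally show ?thesis
    using assms by (simp add: scalar_prod_def atLeast0LessThan mult.commute)
qed

section \<open>The smallest eigenvalue of a symmetric matrix\<close>

(* Vectors of dimension n are modelled by coordinate functions vanishing from n on,
   since carrier_vec carries no topology. *)

lemma continuous_on_coordinate [continuous_intros]:
  "continuous_on S (\<lambda>g :: nat \<Rightarrow> real. g i)"
  by (rule continuous_on_subset[OF continuous_on_product_coordinates]) simp

lemma compact_unit_sphere_coordinates:
  "compact {g :: nat \<Rightarrow> real. (\<forall>i\<ge>n. g i = 0) \<and> (\<Sum>i<n. (g i)\<^sup>2) = 1}"
    (is "compact ?S")
proof -
  let ?box = "PiE UNIV (\<lambda>i. if i < n then {-1..1} else {0 :: real})"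
  have "compactin (product_topology (\<lambda>i. euclidean) UNIV) ?box"
    by (subst compactin_PiE) auto
  then have "compact ?box"
    by (simp add: euclidean_product_topology)
  moreover have "closed {g :: nat \<Rightarrow> real. (\<Sum>i<n. (g i)\<^sup>2) = 1}"
    by (intro closed_Collect_eq continuous_intros)
  moreover have "?S = ?box \<inter> {g. (\<Sum>i<n. (g i)\<^sup>2) = 1}"
  proof -
    have "\<bar>g i\<bar> \<le> 1" if "(\<Sum>i<n. (g i)\<^sup>2) = 1" "i < n" for g :: "nat \<Rightarrow> real" and i
    proof -
      have "(g i)\<^sup>2 \<le> (\<Sum>i<n. (g i)\<^sup>2)"
        by (rule member_le_sum) (use that in auto)
      then show ?thesis
        using that by (simp add: abs_le_square_iff[of _ 1, simplified])
    qed
    then show ?thesis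
      by (auto simp: PiE_iff abs_le_iff split: if_splits)
  qed
  ultimately show ?thesis
    by (simp add: compact_Int_closed)
qed

lemma quadratic_form_attains_min_on_unit_sphere:
  fixes A :: "real mat"
  assumes A: "A \<in> carrier_mat n n" and n: "0 < n"
  obtains v where "v \<in> carrier_vec n" "v \<bullet> v = 1"
    "\<And>w. w \<in> carrier_vec n \<Longrightarrow> w \<bullet> w = 1 \<Longrightarrow> v \<bullet> (A *\<^sub>v v) \<le> w \<bullet> (A *\<^sub>v w)"
proof -
  define S where "S = {g :: nat \<Rightarrow> real. (\<forall>i\<ge>n. g i = 0) \<and> (\<Sum>i<n. (g i)\<^sup>2) = 1}"
  define q where "q g = vec n g \<bullet> (A *\<^sub>v vec n g)" for g
  have q_sum: "q g = (\<Sum>i<n. \<Sum>j<n. g i * A $$ (i, j) * g j)" for g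
    unfolding q_def using A by (simp add: scalar_prod_mult_mat_vec_sum)
  have "S \<noteq> {}"
    using n by (auto simp: S_def power2_eq_square if_distrib sum.delta cong: if_cong
        intro!: exI[of _ "\<lambda>i. if i = 0 then 1 else 0"])
  moreover have "continuous_on S q"
    unfolding q_sum by (intro continuous_intros)
  ultimately obtain g0 where g0: "g0 \<in> S" and min: "\<And>g. g \<in> S \<Longrightarrow> q g0 \<le> q g"
    using continuous_attains_inf[OF compact_unit_sphere_coordinates[of n, folded S_def]] by blast
  show thesis
  proof
    show "vec n g0 \<in> carrier_vec n" by simp
    show "vec n g0 \<bullet> vec n g0 = 1"
      using g0 by (simp add: S_def scalar_prod_self_eq_sum_power2[of _ n])
    fix w :: "real vec" assume w: "w \<in> carrier_vec n" "w \<bullet> w = 1"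
    let ?g = "\<lambda>i. if i < n then w $ i else 0"
    have "?g \<in> S"
      using w by (simp add: S_def scalar_prod_self_eq_sum_power2[of _ n])
    moreover have "vec n ?g = w"
      using w by auto
    ultimately show "vec n g0 \<bullet> (A *\<^sub>v vec n g0) \<le> w \<bullet> (A *\<^sub>v w)"
      using min unfolding q_def by metis
  qed
qed

lemma linear_coeff_eq_0_if_quadratic_nonneg:
  fixes b c :: real
  assumes nonneg: "\<And>t. 0 \<le> 2 * t * b + t\<^sup>2 * c"
  shows "b = 0"
proof (rule ccontr)
  assume "b \<noteq> 0"
  define d where "d = \<bar>c\<bar> + 1"
  have d: "1 \<le> d" "c \<le> d"
    unfolding d_def by auto
  define t where "t = - b / d"
  have "t\<^sup>2 * c \<le> t\<^sup>2 * d"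
    using d by (simp add: mult_left_mono)
  also have "\<dots> = b\<^sup>2 / d"
    using d by (simp add: t_def power2_eq_square field_simps)
  moreover have "2 * t * b = - 2 * (b\<^sup>2 / d)"
    by (simp add: t_def power2_eq_square)
  ultimately have "2 * t * b + t\<^sup>2 * c \<le> - (b\<^sup>2 / d)"
    by linarith
  also have "\<dots> < 0"
    using \<open>b \<noteq> 0\<close> d by simp
  finally show False
    using nonneg[of t] by simp
qed

(* The form at v + t (B v) is 2 t |B v|^2 + O(t^2), which changes sign unless B v = 0. *)
lemma psd_quadratic_form_eq_0_imp_mult_eq_0:
  fixes B :: "real mat"
  assumes B: "B \<in> carrier_mat n n" "transpose_mat B = B"
    and psd: "\<And>w. w \<in> carrier_vec n \<Longrightarrow> 0 \<le> w \<bullet> (B *\<^sub>v w)"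
    and v: "v \<in> carrier_vec n" "v \<bullet> (B *\<^sub>v v) = 0"
  shows "B *\<^sub>v v = 0\<^sub>v n"
proof -
  define w where "w = B *\<^sub>v v"
  have w: "w \<in> carrier_vec n"
    using B v by (simp add: w_def)
  have "v \<bullet> (B *\<^sub>v w) = w \<bullet> w"
    using transpose_vec_mult_scalar[OF B(1) w v(1)] B(2) by (simp add: w_def)
  then have "0 \<le> 2 * t * (w \<bullet> w) + t\<^sup>2 * (w \<bullet> (B *\<^sub>v w))" for t
    using psd[of "v + t \<cdot>\<^sub>v w"] B v w
    by (simp add: w_def mult_add_distrib_mat_vec mult_mat_vec add_scalar_prod_distrib[of _ n]
        scalar_prod_add_distrib[of _ n] power2_eq_square algebra_simps)
  then have "w \<bullet> w = 0"
    by (rule linear_coeff_eq_0_if_quadratic_nonneg)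
  then show ?thesis
    using w by (simp add: scalar_prod_self_eq_0_iff w_def)
qed

lemma quadratic_form_ge_if_ge_on_unit_sphere:
  fixes A :: "real mat"
  assumes A: "A \<in> carrier_mat n n"
    and unit: "\<And>w. w \<in> carrier_vec n \<Longrightarrow> w \<bullet> w = 1 \<Longrightarrow> \<mu> \<le> w \<bullet> (A *\<^sub>v w)"
    and x: "x \<in> carrier_vec n"
  shows "\<mu> * (x \<bullet> x) \<le> x \<bullet> (A *\<^sub>v x)"
proof (cases "x = 0\<^sub>v n")
  case False
  then have pos: "0 < x \<bullet> x"
    using x scalar_prod_self_nonneg[of x] by (simp add: scalar_prod_self_eq_0_iff order_le_neq_trans)
  define u where "u = (1 / vnorm x) \<cdot>\<^sub>v x"
  have "u \<in> carrier_vec n" "u \<bullet> u = 1"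
    using x pos by (simp_all add: u_def power2_eq_square[symmetric] vnorm_power2)
  then have "\<mu> \<le> u \<bullet> (A *\<^sub>v u)"
    by (rule unit)
  also have "\<dots> = x \<bullet> (A *\<^sub>v x) / (x \<bullet> x)"
    using A x by (simp add: u_def mult_mat_vec power2_eq_square[symmetric] vnorm_power2)
  finally show ?thesis
    using pos by (simp add: field_simps)
qed (use A in simp)

lemma symmetric_mat_min_eigenvalue:
  fixes A :: "real mat"
  assumes A: "A \<in> carrier_mat n n" "transpose_mat A = A" and n: "0 < n"
  obtains \<mu> where "eigenvalue A \<mu>" "\<And>x. x \<in> carrier_vec n \<Longrightarrow> \<mu> * (x \<bullet> x) \<le> x \<bullet> (A *\<^sub>v x)"
proof -
  obtain v where v: "v \<in> carrier_vec n" "v \<bullet> v = 1"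
    and min: "\<And>w. w \<in> carrier_vec n \<Longrightarrow> w \<bullet> w = 1 \<Longrightarrow> v \<bullet> (A *\<^sub>v v) \<le> w \<bullet> (A *\<^sub>v w)"
    using quadratic_form_attains_min_on_unit_sphere[OF A(1) n] by blast
  define \<mu> where "\<mu> = v \<bullet> (A *\<^sub>v v)"
  have bound: "\<mu> * (x \<bullet> x) \<le> x \<bullet> (A *\<^sub>v x)" if "x \<in> carrier_vec n" for x
    using A(1) min that unfolding \<mu>_def by (rule quadratic_form_ge_if_ge_on_unit_sphere)
  define B where "B = A - \<mu> \<cdot>\<^sub>m 1\<^sub>m n"
  have B: "B \<in> carrier_mat n n" "transpose_mat B = B"
    using A by (auto simp: B_def transpose_minus intro!: eq_matI)
  have quadratic_form_B: "w \<bullet> (B *\<^sub>v w) = w \<bullet> (A *\<^sub>v w) - \<mu> * (w \<bullet> w)" if "w \<in> carrier_vec n" for w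
    using A that by (simp add: B_def minus_mult_distrib_mat_vec smult_mat_mult_vec
        scalar_prod_minus_distrib[of _ n])
  have "B *\<^sub>v v = 0\<^sub>v n"
    using B v bound by (intro psd_quadratic_form_eq_0_imp_mult_eq_0) (auto simp: quadratic_form_B \<mu>_def)
  then have "(A *\<^sub>v v - \<mu> \<cdot>\<^sub>v v) $ i = 0" if "i < n" for i
    using A v that by (simp add: B_def minus_mult_distrib_mat_vec smult_mat_mult_vec)
  then have "A *\<^sub>v v = \<mu> \<cdot>\<^sub>v v"
    using A v by (intro eq_vecI) auto
  moreover have "v \<noteq> 0\<^sub>v n"
    using v by auto
  ultimately have "eigenvalue A \<mu>"
    using A v by (auto simp: eigenvalue_def eigenvector_def)
  then show thesis
    using bound by (rule that)
qed

lemma quadratic_form_ge_min_eigenvalue: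
  fixes A :: "real mat"
  assumes A: "A \<in> carrier_mat n n" "transpose_mat A = A" and n: "0 < n"
    and lmin: "\<And>\<mu>. eigenvalue A \<mu> \<Longrightarrow> lmin \<le> \<mu>"
    and x: "x \<in> carrier_vec n"
  shows "lmin * (x \<bullet> x) \<le> x \<bullet> (A *\<^sub>v x)"
proof -
  obtain \<mu> where "eigenvalue A \<mu>" "\<mu> * (x \<bullet> x) \<le> x \<bullet> (A *\<^sub>v x)"
    using symmetric_mat_min_eigenvalue[OF A n] x by metis
  then show ?thesis
    using lmin mult_right_mono[OF _ scalar_prod_self_nonneg[of x]] by (meson order_trans)
qed

lemma eigenvalue_ge_if_quadratic_form_ge:
  fixes A :: "real mat"
  assumes A: "A \<in> carrier_mat n n"
    and ge: "\<And>x. x \<in> carrier_vec n \<Longrightarrow> c * (x \<bullet> x) \<le> x \<bullet> (A *\<^sub>v x)"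
    and "eigenvalue A \<kappa>"
  shows "c \<le> \<kappa>"
proof -
  obtain v where v: "v \<in> carrier_vec n" "v \<noteq> 0\<^sub>v n" "A *\<^sub>v v = \<kappa> \<cdot>\<^sub>v v"
    using \<open>eigenvalue A \<kappa>\<close> A by (auto simp: eigenvalue_def eigenvector_def)
  have "0 < v \<bullet> v"
    using v scalar_prod_self_nonneg[of v] by (simp add: scalar_prod_self_eq_0_iff order_le_neq_trans)
  moreover have "c * (v \<bullet> v) \<le> \<kappa> * (v \<bullet> v)"
    using ge[OF v(1)] v by simp
  ultimately show ?thesis
    by simp
qed

lemma eigenvalue_if_row_sums_eq:
  fixes A :: "'a :: comm_ring_1 mat"
  assumes A: "A \<in> carrier_mat n n" and n: "0 < n"
    and rows: "\<And>i. i < n \<Longrightarrow> (\<Sum>j<n. A $$ (i, j)) = r"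
  shows "eigenvalue A r"
proof -
  define v where "v = vec n (\<lambda>_. 1 :: 'a)"
  have "v \<in> carrier_vec n"
    by (simp add: v_def)
  moreover have "A *\<^sub>v v = r \<cdot>\<^sub>v v"
    using A rows by (intro eq_vecI) (auto simp: v_def scalar_prod_def atLeast0LessThan)
  moreover have "v \<noteq> 0\<^sub>v n"
    using n by (auto simp: v_def dest!: arg_cong[of _ _ "\<lambda>u. u $ 0"])
  ultimately show ?thesis
    using A by (auto simp: eigenvalue_def eigenvector_def)
qed

lemma sum_abs_scalar_prod_mult_unit_vec_le:
  fixes A :: "real mat"
  assumes A: "A \<in> carrier_mat n n"
    and nonneg: "\<And>i j. i < n \<Longrightarrow> j < n \<Longrightarrow> 0 \<le> A $$ (i, j)"
    and rows: "\<And>i. i < n \<Longrightarrow> (\<Sum>j<n. A $$ (i, j)) = r"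
    and y: "y \<in> carrier_vec n"
  shows "(\<Sum>k<n. \<bar>y \<bullet> (A *\<^sub>v unit_vec n k)\<bar>) \<le> r * (\<Sum>i<n. \<bar>y $ i\<bar>)"
proof -
  have "(\<Sum>k<n. \<bar>y \<bullet> (A *\<^sub>v unit_vec n k)\<bar>) = (\<Sum>k<n. \<bar>\<Sum>i<n. A $$ (i, k) * y $ i\<bar>)"
    using A y by (simp add: scalar_prod_mult_mat_vec_unit)
  also have "\<dots> \<le> (\<Sum>k<n. \<Sum>i<n. A $$ (i, k) * \<bar>y $ i\<bar>)"
    using nonneg by (intro sum_mono order_trans[OF sum_abs]) (simp add: abs_mult)
  also have "\<dots> = (\<Sum>i<n. (\<Sum>k<n. A $$ (i, k)) * \<bar>y $ i\<bar>)"
    by (subst sum.swap) (simp add: sum_distrib_right)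
  also have "\<dots> = r * (\<Sum>i<n. \<bar>y $ i\<bar>)"
    using rows by (simp add: sum_distrib_left)
  finally show ?thesis .
qed

section \<open>The circulant matrix\<close>

lemma circA_carrier_mat: "circA \<alpha> \<beta> s \<in> carrier_mat s s"
  unfolding circA_def cyc_shift_def by auto

lemma index_circA:
  assumes "i < s" "j < s"
  shows "circA \<alpha> \<beta> s $$ (i, j) = (if i = j then \<beta> else 0)
    + \<alpha> * ((if j = (i + 1) mod s then 1 else 0) + (if i = (j + 1) mod s then 1 else 0))"
  using assms unfolding circA_def cyc_shift_def by simp

lemma transpose_circA: "transpose_mat (circA \<alpha> \<beta> s) = circA \<alpha> \<beta> s"
  using circA_carrier_mat[of \<alpha> \<beta> s] by (intro eq_matI) (auto simp: index_circA)

lemma circA_nonneg: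
  "0 \<le> \<alpha> \<Longrightarrow> 0 \<le> \<beta> \<Longrightarrow> i < s \<Longrightarrow> j < s \<Longrightarrow> 0 \<le> circA \<alpha> \<beta> s $$ (i, j)"
  by (simp add: index_circA)

lemma sum_mod_shift:
  fixes s :: nat
  assumes "0 < s"
  shows "(\<Sum>i<s. g ((i + 1) mod s)) = (\<Sum>i<s. g i :: 'a :: comm_monoid_add)"
proof -
  obtain m where m: "s = Suc m"
    using assms by (cases s) auto
  have "(\<Sum>i<Suc m. g ((i + 1) mod Suc m)) = (\<Sum>i<m. g ((i + 1) mod Suc m)) + g 0"
    by simp
  also have "(\<Sum>i<m. g ((i + 1) mod Suc m)) = (\<Sum>i<m. g (Suc i))"
    by (intro sum.cong refl) simp
  also have "(\<Sum>i<m. g (Suc i)) + g 0 = (\<Sum>i<Suc m. g i)"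
    unfolding sum.lessThan_Suc_shift by (simp add: add.commute)
  finally show ?thesis
    using m by simp
qed

lemma circA_row_sum:
  assumes "i < s"
  shows "(\<Sum>j<s. circA \<alpha> \<beta> s $$ (i, j)) = \<beta> + 2 * \<alpha>"
proof -
  have "(\<Sum>j<s. if i = (j + 1) mod s then 1 else 0 :: real) = 1"
    using sum_mod_shift[of s "\<lambda>j. if i = j then 1 else 0 :: real"] assms by simp
  then show ?thesis
    using assms by (simp add: index_circA sum.distrib sum_distrib_left[symmetric] sum.delta')
qed

lemma cyc_shift_carrier_mat: "cyc_shift s \<in> carrier_mat s s"
  unfolding cyc_shift_def by simp

lemma index_cyc_shift_mult_vec:
  "x \<in> carrier_vec s \<Longrightarrow> i < s \<Longrightarrow> (cyc_shift s *\<^sub>v x) $ i = x $ ((i + 1) mod s)"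
  by (simp add: cyc_shift_def scalar_prod_def atLeast0LessThan of_bool_def[symmetric] sum.delta')

lemma scalar_prod_cyc_shift_ge:
  assumes x: "x \<in> carrier_vec s"
  shows "- (x \<bullet> x) \<le> x \<bullet> (cyc_shift s *\<^sub>v x)"
proof (cases "s = 0")
  case False
  have am_gm: "- (a\<^sup>2 + b\<^sup>2) / 2 \<le> a * b" for a b :: real
    using zero_le_power2[of "a + b"] unfolding power2_sum by (simp add: field_simps)
  have "- (x \<bullet> x) = - ((\<Sum>i<s. (x $ i)\<^sup>2) + (\<Sum>i<s. (x $ ((i + 1) mod s))\<^sup>2)) / 2"
    using x False sum_mod_shift[of s "\<lambda>i. (x $ i)\<^sup>2"] by (simp add: scalar_prod_self_eq_sum_power2)
  also have "\<dots> = (\<Sum>i<s. - ((x $ i)\<^sup>2 + (x $ ((i + 1) mod s))\<^sup>2) / 2)"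
    by (simp add: sum.distrib sum_negf sum_subtractf flip: sum_divide_distrib)
  also have "\<dots> \<le> (\<Sum>i<s. x $ i * x $ ((i + 1) mod s))"
    by (intro sum_mono am_gm)
  also have "\<dots> = x \<bullet> (cyc_shift s *\<^sub>v x)"
    using x carrier_matD[OF cyc_shift_carrier_mat[of s]]
    by (simp add: scalar_prod_def atLeast0LessThan index_cyc_shift_mult_vec del: index_mult_mat_vec)
  finally show ?thesis .
qed (use x in \<open>simp add: scalar_prod_def cyc_shift_def\<close>)

lemma circA_quadratic_form_ge:
  assumes "0 \<le> \<alpha>" and x: "x \<in> carrier_vec s"
  shows "(\<beta> - 2 * \<alpha>) * (x \<bullet> x) \<le> x \<bullet> (circA \<alpha> \<beta> s *\<^sub>v x)"
proof -
  let ?P = "cyc_shift s"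
  have P: "?P \<in> carrier_mat s s" "?P *\<^sub>v x \<in> carrier_vec s"
    using x by (auto intro: cyc_shift_carrier_mat mult_mat_vec_carrier)
  have "x \<bullet> (transpose_mat ?P *\<^sub>v x) = x \<bullet> (?P *\<^sub>v x)"
    using x P transpose_vec_mult_scalar[OF P(1) x x] by (simp add: comm_scalar_prod[of _ s])
  then have "x \<bullet> (circA \<alpha> \<beta> s *\<^sub>v x) = \<beta> * (x \<bullet> x) + 2 * \<alpha> * (x \<bullet> (?P *\<^sub>v x))"
    using x P by (simp add: circA_def add_mult_distrib_mat_vec[of _ s s] smult_mat_mult_vec
        scalar_prod_add_distrib[of _ s])
  then show ?thesis
    using mult_left_mono[OF scalar_prod_cyc_shift_ge[OF x], of "2 * \<alpha>"] assms
    by (simp add: algebra_simps)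
qed

section \<open>Lower bound for the functional\<close>

lemma ln_cosh_le_abs: "ln (cosh t) \<le> \<bar>t :: real\<bar>"
proof -
  have "cosh t \<le> exp \<bar>t\<bar>"
    unfolding cosh_field_def by (cases "0 \<le> t") (auto intro: add_mono)
  then have "ln (cosh t) \<le> ln (exp \<bar>t\<bar>)"
    using cosh_real_pos[of t] by (subst ln_le_cancel_iff) auto
  then show ?thesis
    by simp
qed

lemma phiN_ge:
  assumes "0 \<le> \<alpha>" "0 \<le> \<beta>" and y: "y \<in> carrier_vec s"
  shows "y \<bullet> (circA \<alpha> \<beta> s *\<^sub>v y) / 2 - (\<beta> + 2 * \<alpha>) * (sqrt s * vnorm y) \<le> phiN \<alpha> \<beta> s y"
proof -
  let ?A = "circA \<alpha> \<beta> s"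
  have "(\<Sum>k<s. ln (cosh (y \<bullet> (?A *\<^sub>v unit_vec s k)))) \<le> (\<Sum>k<s. \<bar>y \<bullet> (?A *\<^sub>v unit_vec s k)\<bar>)"
    by (intro sum_mono ln_cosh_le_abs)
  also have "\<dots> \<le> (\<beta> + 2 * \<alpha>) * (\<Sum>i<s. \<bar>y $ i\<bar>)"
    by (rule sum_abs_scalar_prod_mult_unit_vec_le[OF circA_carrier_mat circA_nonneg[OF assms(1,2)]
          circA_row_sum y])
  also have "\<dots> \<le> (\<beta> + 2 * \<alpha>) * (sqrt s * vnorm y)"
    using assms sum_abs_le_sqrt_dim_vnorm[OF y] by (intro mult_left_mono) auto
  finally show ?thesis
    unfolding phiN_def by simp
qed

lemma phiN_rescaled_ge:
  fixes N s :: nat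
  assumes "0 \<le> \<alpha>" "0 \<le> \<beta>" "0 < s" "s \<le> N" and x: "x \<in> carrier_vec s"
  shows "x \<bullet> (circA \<alpha> \<beta> s *\<^sub>v x) / 2 - (\<beta> + 2 * \<alpha>) * (sqrt N * vnorm x)
    \<le> N / s * phiN \<alpha> \<beta> s (sqrt (s / N) \<cdot>\<^sub>v x)"
proof -
  let ?A = "circA \<alpha> \<beta> s" and ?c = "sqrt (s / N)"
  have N: "0 < real N"
    using assms by simp
  have scale: "N / s * ?c\<^sup>2 = 1" "N / s * (sqrt s * ?c) = sqrt N"
    using assms N by (simp_all add: real_sqrt_divide field_simps real_div_sqrt)
  have quad: "(?c \<cdot>\<^sub>v x) \<bullet> (?A *\<^sub>v (?c \<cdot>\<^sub>v x)) = ?c\<^sup>2 * (x \<bullet> (?A *\<^sub>v x))"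
    using x carrier_matD[OF circA_carrier_mat[of \<alpha> \<beta> s]]
    by (simp add: mult_mat_vec[OF circA_carrier_mat x]) (simp flip: mult.assoc)
  have norm: "vnorm (?c \<cdot>\<^sub>v x) = ?c * vnorm x"
    by (simp add: vnorm_smult)
  have "x \<bullet> (?A *\<^sub>v x) / 2 - (\<beta> + 2 * \<alpha>) * (sqrt N * vnorm x)
      = (N / s * ?c\<^sup>2) * (x \<bullet> (?A *\<^sub>v x)) / 2 - (\<beta> + 2 * \<alpha>) * (N / s * (sqrt s * ?c) * vnorm x)"
    unfolding scale by simp
  also have "\<dots> = N / s * ((?c \<cdot>\<^sub>v x) \<bullet> (?A *\<^sub>v (?c \<cdot>\<^sub>v x)) / 2
      - (\<beta> + 2 * \<alpha>) * (sqrt s * vnorm (?c \<cdot>\<^sub>v x)))"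
    unfolding quad norm by (simp only: algebra_simps)
  also have "\<dots> \<le> N / s * phiN \<alpha> \<beta> s (?c \<cdot>\<^sub>v x)"
    using assms by (intro mult_left_mono phiN_ge) auto
  finally show ?thesis .
qed

theorem lemma7p8:
  fixes \<alpha> \<beta> R lmin lmax :: real and N s :: nat and x :: "real vec"
  assumes "\<beta> > 2 * \<alpha>" and "2 * \<alpha> > 0"
    and "0 < s" and "s \<le> N"
    and "eigenvalue (circA \<alpha> \<beta> s) lmin"
    and "eigenvalue (circA \<alpha> \<beta> s) lmax"
    and "\<And>mu. eigenvalue (circA \<alpha> \<beta> s) mu \<Longrightarrow> lmin \<le> mu \<and> mu \<le> lmax"
    and "R > 2 * lmax / lmin"
    and "x \<in> carrier_vec s"
    and "vnorm x > R * sqrt (real N)"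
  shows "real N / real s * phiN \<alpha> \<beta> s (sqrt (real s / real N) \<cdot>\<^sub>v x)
           \<ge> (lmin / 2 - lmax / R) * (vnorm x)\<^sup>2"
proof -
  let ?A = "circA \<alpha> \<beta> s"
  have A: "?A \<in> carrier_mat s s" "transpose_mat ?A = ?A"
    by (simp_all add: circA_carrier_mat transpose_circA)
  have "\<beta> - 2 * \<alpha> \<le> lmin"
    using assms(2) circA_quadratic_form_ge
    by (intro eigenvalue_ge_if_quadratic_form_ge[OF A(1) _ assms(5)]) auto
  then have lmin: "0 < lmin"
    using assms(1) by linarith
  have lmax: "\<beta> + 2 * \<alpha> \<le> lmax"
    using assms(7) eigenvalue_if_row_sums_eq[OF A(1) assms(3) circA_row_sum] by blast
  have quad: "lmin * (vnorm x)\<^sup>2 \<le> x \<bullet> (?A *\<^sub>v x)"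
    unfolding vnorm_power2
    by (rule quadratic_form_ge_min_eigenvalue[OF A assms(3) _ assms(9)]) (use assms(7) in blast)
  have "0 < R"
    using assms(1,2,8) lmin lmax by (smt (verit) divide_pos_pos)
  then have "sqrt N * vnorm x \<le> (vnorm x)\<^sup>2 / R"
    using mult_right_mono[OF less_imp_le[OF assms(10)] vnorm_nonneg[of x]]
    by (simp add: field_simps power2_eq_square)
  then have "lmax * (sqrt N * vnorm x) \<le> lmax * ((vnorm x)\<^sup>2 / R)"
    using lmax assms(1,2) by (intro mult_left_mono) auto
  then have "(lmin / 2 - lmax / R) * (vnorm x)\<^sup>2 \<le> lmin * (vnorm x)\<^sup>2 / 2 - lmax * (sqrt N * vnorm x)"
    by (simp add: left_diff_distrib)
  also have "\<dots> \<le> x \<bullet> (?A *\<^sub>v x) / 2 - (\<beta> + 2 * \<alpha>) * (sqrt N * vnorm x)"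
    using quad mult_right_mono[OF lmax, of "sqrt N * vnorm x"] vnorm_nonneg[of x] by simp
  also have "\<dots> \<le> N / s * phiN \<alpha> \<beta> s (sqrt (s / N) \<cdot>\<^sub>v x)"
    using assms by (intro phiN_rescaled_ge) auto
  finally show ?thesis .
qed

end
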